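(* Let $S_1$ and $S_2$ be path strings containing no symbolic links that refer to the same file on the file system, where $S_2$ is canonical and $S_1$ may or may not be canonical. Run the main loop of sanitize on $S_1$. Then at every iteration $i$ of the loop, one of the following holds: (1) the string representation of the stack is a prefix of $S_2$; or (2) if a directory token pushed onto the stack made the string representation of the stack cease to be a prefix of $S_2$, then this directory token is eventually popped off the stack by a subsequent ".." token.
   Context: Path strings are strings over valid filename characters together with "." and "/". Tokenization splits a path string on every maximal run of consecutive "/" characters, discarding empty pieces. A path string is canonical if it is "/" or of the form "/$a_1$/$a_2$/.../$a_n$" with $n\ge1$, where each $a_j$ is a nonempty filename containing no "/" and different from "." and "..". The main loop of sanitize on a path string $U$: start with an empty stack and process the tokens of $U$ from left to right; if the token is "..", pop the top of the stack if the stack is nonempty (otherwise do nothing); if the token is ".", do nothing; otherwise push the token. The string representation of a stack with contents $t_1,\dots,t_m$ (bottom to top) is "/" if $m=0$ and "/$t_1$/$t_2$/.../$t_m$" if $m\ge1$. A string $A$ is a prefix of a string $B$ if $|A|\le|B|$ and $A[j]=B[j]$ for every position $j$ of $A$ (character-wise prefix). Path strings are interpreted in a hierarchical (tree-shaped) file system rooted at "/", with no symbolic links: starting at the root, a filename token moves to the child of that name, "." stays in the current directory, and ".." moves to the parent directory (the parent of the root being the root). Two path strings refer to the same file if this resolution leads to the same file. *)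

theory Defs
  imports Main
begin

fun split_slash :: "string \<Rightarrow> string list" where
  "split_slash [] = [[]]"
| "split_slash (c # cs) =
     (if c = CHR ''/'' then [] # split_slash cs
      else (case split_slash cs of [] \<Rightarrow> [[c]] | (w # ws) \<Rightarrow> (c # w) # ws))"

definition tokens :: "string \<Rightarrow> string list" where
  "tokens s = filter (\<lambda>w. w \<noteq> []) (split_slash s)"

definition valid_name :: "string \<Rightarrow> bool" where
  "valid_name a \<longleftrightarrow> a \<noteq> [] \<and> CHR ''/'' \<notin> set a \<and> a \<noteq> ''.'' \<and> a \<noteq> ''..''"

text \<open>String representation of a stack (list bottom-to-top).\<close>
definition stack_str :: "string list \<Rightarrow> string" where
  "stack_str st = (if st = [] then ''/'' else concat (map (\<lambda>t. CHR ''/'' # t) st))"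

definition canonical :: "string \<Rightarrow> bool" where
  "canonical s \<longleftrightarrow> s = ''/'' \<or> (\<exists>as. as \<noteq> [] \<and> (\<forall>a\<in>set as. valid_name a) \<and> s = stack_str as)"

definition str_prefix :: "string \<Rightarrow> string \<Rightarrow> bool" where
  "str_prefix A B \<longleftrightarrow> length A \<le> length B \<and> (\<forall>j<length A. A ! j = B ! j)"

definition san_step :: "string list \<Rightarrow> string \<Rightarrow> string list" where
  "san_step st t = (if t = ''..'' then butlast st else if t = ''.'' then st else st @ [t])"

definition san_stack :: "string \<Rightarrow> nat \<Rightarrow> string list" where
  "san_stack U i = foldl san_step [] (take i (tokens U))"

text \<open>A tree-shaped file system without symbolic links: a file (node) is identified
  by the list of names on its path from the root; the set of existing nodes
  contains the root and is closed under taking parents (prefixes).\<close>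
definition file_system :: "string list set \<Rightarrow> bool" where
  "file_system fs \<longleftrightarrow> [] \<in> fs \<and> (\<forall>p q. p @ q \<in> fs \<longrightarrow> p \<in> fs)"

definition res_step :: "string list set \<Rightarrow> string list option \<Rightarrow> string \<Rightarrow> string list option" where
  "res_step fs cur t = (case cur of None \<Rightarrow> None | Some c \<Rightarrow>
      (if t = ''.'' then Some c
       else if t = ''..'' then Some (butlast c)
       else if c @ [t] \<in> fs then Some (c @ [t]) else None))"

definition resolve :: "string list set \<Rightarrow> string \<Rightarrow> string list option" where
  "resolve fs s = foldl (res_step fs) (Some []) (tokens s)"

definition same_file :: "string list set \<Rightarrow> string \<Rightarrow> string \<Rightarrow> bool" where
  "same_file fs s1 s2 \<longleftrightarrow> resolve fs s1 \<noteq> None \<and> resolve fs s1 = resolve fs s2"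

end

theory Submission
  imports Defs
begin

text \<open>Resolution of \<open>S\<^sub>1\<close> succeeds, and a successful resolution performs exactly the stack
  operations of sanitize, so the final stack of sanitize is the resolved file; since \<open>S\<^sub>2\<close> is
  canonical, its representation is \<open>S\<^sub>2\<close> itself. Stacks whose representation is a prefix of
  \<open>S\<^sub>2\<close> are closed under taking list prefixes. If the stack after step \<open>i\<close> is not such a stack,
  let \<open>d + 1\<close> be the length of its shortest bad prefix. The entry at height \<open>d + 1\<close> was pushed
  at the last step \<open>j\<close> at which the stack had height \<open>d\<close>, and the bottom \<open>d + 1\<close> entries stay
  frozen as long as the height stays above \<open>d\<close>. As the final stack is good, the height must drop
  back to \<open>d\<close> at some step \<open>k \<ge> i\<close>, and that step pops the bad entry with a "..".\<close>

lemma split_slash_not_Nil: "split_slash s \<noteq> []"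
  by (induction s) (auto split: list.split)

lemma split_slash_append_name:
  "CHR ''/'' \<notin> set t \<Longrightarrow> split_slash (t @ s) = (t @ hd (split_slash s)) # tl (split_slash s)"
  by (induction t) (auto simp: split_slash_not_Nil split: list.split)

lemma split_slash_stack_str:
  "\<forall>a\<in>set as. CHR ''/'' \<notin> set a \<Longrightarrow>
    split_slash (stack_str as) = (if as = [] then [[], []] else [] # as)"
proof (induction as)
  case (Cons a as)
  then show ?case
    using split_slash_append_name[of a "[]"]
    by (cases "as = []") (auto simp: stack_str_def split_slash_append_name)
qed (simp add: stack_str_def)

lemma tokens_stack_str: "\<forall>a\<in>set as. valid_name a \<Longrightarrow> tokens (stack_str as) = as"
  by (auto simp: tokens_def valid_name_def split_slash_stack_str intro!: filter_True)

lemma canonical_imp_stack_str: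
  "canonical s \<Longrightarrow> \<exists>as. (\<forall>a\<in>set as. valid_name a) \<and> s = stack_str as"
  unfolding canonical_def by (metis empty_iff list.set(1) stack_str_def)

lemma foldl_san_step_names:
  "\<forall>a\<in>set as. a \<noteq> ''.'' \<and> a \<noteq> ''..'' \<Longrightarrow> foldl san_step c as = c @ as"
  by (induction as arbitrary: c) (auto simp: san_step_def)

lemma foldl_res_step_None: "foldl (res_step fs) None xs = None"
  by (induction xs) (auto simp: res_step_def)

lemma foldl_res_step_Some:
  "foldl (res_step fs) (Some c) xs = Some c' \<Longrightarrow> c' = foldl san_step c xs"
  by (induction xs arbitrary: c)
     (auto simp: res_step_def san_step_def foldl_res_step_None split: if_splits)

lemma resolve_eq_final_san_stack:
  "resolve fs s = Some c \<Longrightarrow> san_stack s (length (tokens s)) = c"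
  unfolding resolve_def san_stack_def by (metis take_all_iff order_refl foldl_res_step_Some)

lemma resolve_canonical:
  assumes "canonical s" and "resolve fs s = Some c"
  shows "s = stack_str c"
proof -
  obtain as where names: "\<forall>a\<in>set as. valid_name a" and s: "s = stack_str as"
    using canonical_imp_stack_str[OF assms(1)] by blast
  have "c = foldl san_step [] as"
    using resolve_eq_final_san_stack[OF assms(2)] by (simp add: san_stack_def s tokens_stack_str names)
  also have "\<dots> = as"
    using names by (simp add: foldl_san_step_names valid_name_def)
  finally show ?thesis using s by simp
qed

lemma str_prefix_iff: "str_prefix A B \<longleftrightarrow> (\<exists>C. B = A @ C)"
proof
  assume "str_prefix A B"
  then have "take (length A) B = A"
    by (auto simp: str_prefix_def intro: nth_equalityI)
  then show "\<exists>C. B = A @ C" by (metis append_take_drop_id)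
qed (auto simp: str_prefix_def nth_append)

lemma str_prefix_trans: "str_prefix A B \<Longrightarrow> str_prefix B C \<Longrightarrow> str_prefix A C"
  by (auto simp: str_prefix_iff)

lemma str_prefix_stack_str_append: "str_prefix (stack_str p) (stack_str (p @ q))"
  by (cases "p = []"; cases q) (auto simp: stack_str_def str_prefix_iff)

lemma str_prefix_stack_str_take: "str_prefix (stack_str (take m p)) (stack_str p)"
  by (metis append_take_drop_id str_prefix_stack_str_append)

lemma ex_shortest_bad_prefix:
  assumes "P []" and "\<not> P xs"
  shows "\<exists>d<length xs. P (take d xs) \<and> \<not> P (take (Suc d) xs)"
proof -
  obtain d where "d < length xs" "\<forall>m\<le>d. P (take m xs)" "\<not> P (take (Suc d) xs)"
    using ex_least_nat_less[of "\<lambda>m. \<not> P (take m xs)" "length xs"] assms by auto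
  then show ?thesis by auto
qed

lemma ex_first_le_after:
  fixes f :: "nat \<Rightarrow> nat"
  assumes "i \<le> n" and "f n \<le> d" and "d < f i"
  shows "\<exists>k. i \<le> k \<and> k < n \<and> f (Suc k) \<le> d \<and> (\<forall>l. i \<le> l \<and> l \<le> k \<longrightarrow> d < f l)"
proof -
  obtain k where "k < n - i" "\<forall>l\<le>k. d < f (i + l)" "f (i + Suc k) \<le> d"
    using ex_least_nat_less[of "\<lambda>l. f (i + l) \<le> d" "n - i"] assms by (auto simp: not_le)
  moreover have "d < f l" if "i \<le> l" "l \<le> i + k" for l
    using \<open>\<forall>l\<le>k. d < f (i + l)\<close>[rule_format, of "l - i"] that by simp
  ultimately show ?thesis
    by (intro exI[of _ "i + k"]) auto
qed

lemma ex_last_le_before: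
  fixes f :: "nat \<Rightarrow> nat"
  assumes "f 0 \<le> d" and "d < f i"
  shows "\<exists>j<i. f j \<le> d \<and> (\<forall>l. j < l \<and> l \<le> i \<longrightarrow> d < f l)"
proof -
  obtain k where k: "k < i" "\<forall>l\<le>k. d < f (i - l)" "f (i - Suc k) \<le> d"
    using ex_least_nat_less[of "\<lambda>l. f (i - l) \<le> d" i] assms by (auto simp: not_le)
  have "d < f l" if "i - Suc k < l" "l \<le> i" for l
    using k(2)[rule_format, of "i - l"] that by simp
  then show ?thesis
    using k by (intro exI[of _ "i - Suc k"]) auto
qed

lemma san_stack_0: "san_stack U 0 = []"
  by (simp add: san_stack_def)

lemma san_stack_Suc:
  "l < length (tokens U) \<Longrightarrow> san_stack U (Suc l) = san_step (san_stack U l) (tokens U ! l)"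
  by (simp add: san_stack_def take_Suc_conv_app_nth)

lemma san_stack_Suc_beyond: "length (tokens U) \<le> l \<Longrightarrow> san_stack U (Suc l) = san_stack U l"
  by (simp add: san_stack_def)

lemma length_san_stack_Suc_le: "length (san_stack U (Suc l)) \<le> Suc (length (san_stack U l))"
  by (cases "l < length (tokens U)") (auto simp: san_stack_Suc san_stack_Suc_beyond san_step_def)

lemma san_stack_Suc_grows:
  assumes "l < length (tokens U)" and "length (san_stack U l) < length (san_stack U (Suc l))"
  shows "san_stack U (Suc l) = san_stack U l @ [tokens U ! l]
    \<and> tokens U ! l \<noteq> ''.'' \<and> tokens U ! l \<noteq> ''..''"
  using assms by (auto simp: san_stack_Suc san_step_def split: if_splits)

lemma san_stack_Suc_shrinks:
  assumes "l < length (tokens U)" and "length (san_stack U (Suc l)) < length (san_stack U l)"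
  shows "tokens U ! l = ''..'' \<and> san_stack U (Suc l) = butlast (san_stack U l)"
  using assms by (auto simp: san_stack_Suc san_step_def split: if_splits)

lemma take_san_step:
  assumes "d \<le> length st" and "d \<le> length (san_step st t)"
  shows "take d (san_step st t) = take d st"
proof -
  have "take d (butlast st) = take d st" if "d \<le> length (butlast st)"
    using that by (simp add: butlast_conv_take min_absorb1)
  then show "take d (san_step st t) = take d st"
    using assms by (auto simp: san_step_def)
qed

lemma san_stack_take_stable:
  assumes "a \<le> b" and "\<forall>l. a \<le> l \<and> l \<le> b \<longrightarrow> d \<le> length (san_stack U l)"
  shows "take d (san_stack U b) = take d (san_stack U a)"
  using assms
proof (induction b rule: dec_induct)
  case (step l)
  have "d \<le> length (san_stack U l)" "d \<le> length (san_stack U (Suc l))"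
    using step.prems step.hyps by auto
  then have "take d (san_stack U (Suc l)) = take d (san_stack U l)"
    by (cases "l < length (tokens U)") (simp_all add: san_stack_Suc san_stack_Suc_beyond take_san_step)
  then show ?case using step by auto
qed simp

lemma san_stack_last_push:
  assumes "i \<le> length (tokens U)" and "d < length (san_stack U i)"
  obtains j where "j < i" "length (san_stack U j) = d"
    "san_stack U (Suc j) = san_stack U j @ [tokens U ! j]"
    "tokens U ! j \<noteq> ''.''" "tokens U ! j \<noteq> ''..''"
    "\<forall>l. j < l \<and> l \<le> i \<longrightarrow> d < length (san_stack U l)"
proof -
  obtain j where j: "j < i" "length (san_stack U j) \<le> d"
    and above: "\<forall>l. j < l \<and> l \<le> i \<longrightarrow> d < length (san_stack U l)"
    using ex_last_le_before[of "\<lambda>l. length (san_stack U l)" d i] assms(2) by (auto simp: san_stack_0)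
  then have "length (san_stack U j) = d" "d < length (san_stack U (Suc j))"
    using length_san_stack_Suc_le[of U j] by fastforce+
  moreover have "j < length (tokens U)"
    using j assms(1) by simp
  ultimately show ?thesis
    using that j above san_stack_Suc_grows by simp
qed

lemma san_stack_first_pop:
  assumes "i \<le> l" "l \<le> length (tokens U)" "length (san_stack U l) \<le> d"
    and "d < length (san_stack U i)"
  obtains k where "i \<le> k" "k < length (tokens U)" "tokens U ! k = ''..''"
    "length (san_stack U k) = Suc d" "\<forall>l. i \<le> l \<and> l \<le> k \<longrightarrow> d < length (san_stack U l)"
proof -
  obtain k where k: "i \<le> k" "k < l" "length (san_stack U (Suc k)) \<le> d"
    and above: "\<forall>l. i \<le> l \<and> l \<le> k \<longrightarrow> d < length (san_stack U l)"
    using ex_first_le_after[of i l "\<lambda>l. length (san_stack U l)" d] assms by auto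
  have "k < length (tokens U)"
    using k assms(2) by simp
  then show ?thesis
    using that k above san_stack_Suc_shrinks length_san_stack_Suc_le[of U k] by fastforce
qed

lemma san_stack_bad_push_popped:
  assumes prefix_closed: "\<And>p m. P p \<Longrightarrow> P (take m p)"
    and final: "P (san_stack U (length (tokens U)))"
    and "i \<le> length (tokens U)" and bad: "\<not> P (san_stack U i)"
  shows "\<exists>j<i. tokens U ! j \<noteq> ''.'' \<and> tokens U ! j \<noteq> ''..''
    \<and> P (san_stack U j) \<and> \<not> P (san_stack U (Suc j))
    \<and> (\<forall>l. Suc j \<le> l \<and> l \<le> i \<longrightarrow> length (san_stack U l) > length (san_stack U j))
    \<and> (\<exists>k. i \<le> k \<and> k < length (tokens U) \<and> tokens U ! k = ''..''
          \<and> length (san_stack U k) = Suc (length (san_stack U j))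
          \<and> (\<forall>l. Suc j \<le> l \<and> l \<le> k \<longrightarrow> length (san_stack U l) > length (san_stack U j)))"
proof -
  let ?st = "san_stack U" and ?n = "length (tokens U)"
  let ?h = "\<lambda>l. length (?st l)"
  have "P []" using prefix_closed[OF final, of 0] by simp
  then obtain d where d: "d < ?h i" "P (take d (?st i))" "\<not> P (take (Suc d) (?st i))"
    using ex_shortest_bad_prefix[of P "?st i"] bad by blast
  obtain j where j: "j < i" and hj: "?h j = d" and push: "?st (Suc j) = ?st j @ [tokens U ! j]"
    and name: "tokens U ! j \<noteq> ''.''" "tokens U ! j \<noteq> ''..''"
    and above_j: "\<forall>l. j < l \<and> l \<le> i \<longrightarrow> d < ?h l"
    using san_stack_last_push[OF assms(3) d(1)] by blast
  have frozen: "take (Suc d) (?st l) = ?st (Suc j)"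
    if "Suc j \<le> l" "\<forall>l'. Suc j \<le> l' \<and> l' \<le> l \<longrightarrow> d < ?h l'" for l
  proof -
    have "take (Suc d) (?st l) = take (Suc d) (?st (Suc j))"
      using san_stack_take_stable[where U = U and d = "Suc d", OF that(1)] that(2)
      by (simp add: Suc_le_eq)
    also have "\<dots> = ?st (Suc j)"
      using push hj by simp
    finally show ?thesis .
  qed
  have frozen_i: "take (Suc d) (?st i) = ?st (Suc j)"
    using frozen above_j j by (simp add: Suc_le_eq)
  then have bad_j: "\<not> P (?st (Suc j))"
    using d(3) by simp
  have "?st j = take d (?st (Suc j))"
    using push hj by simp
  also have "\<dots> = take d (?st i)"
    using frozen_i[symmetric] by simp
  finally have good_j: "P (?st j)"
    using d(2) by simp
  have "\<exists>l. i \<le> l \<and> l \<le> ?n \<and> ?h l \<le> d"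
  proof (rule ccontr)
    assume "\<nexists>l. i \<le> l \<and> l \<le> ?n \<and> ?h l \<le> d"
    then have "\<forall>l. Suc j \<le> l \<and> l \<le> ?n \<longrightarrow> d < ?h l"
      using above_j by (metis Suc_le_eq not_le_imp_less nat_le_linear)
    then have "take (Suc d) (?st ?n) = ?st (Suc j)"
      using frozen j assms(3) by simp
    then show False
      using prefix_closed[OF final, of "Suc d"] bad_j by simp
  qed
  then obtain k where k: "i \<le> k" "k < ?n" and pop: "tokens U ! k = ''..''" "?h k = Suc d"
    and above_k: "\<forall>l. i \<le> l \<and> l \<le> k \<longrightarrow> d < ?h l"
    using san_stack_first_pop d(1) by metis
  have "\<forall>l. Suc j \<le> l \<and> l \<le> k \<longrightarrow> d < ?h l"
    using above_j above_k by (metis Suc_le_eq nat_le_linear)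
  then show ?thesis
    using j name good_j bad_j above_j k pop hj by (intro exI[of _ j]) auto
qed

theorem lemma3:
  fixes fs :: "string list set" and S1 S2 :: string and i :: nat
  assumes "file_system fs"
    and "canonical S2"
    and "same_file fs S1 S2"
    and "i \<le> length (tokens S1)"
  shows "str_prefix (stack_str (san_stack S1 i)) S2 \<or>
    (\<exists>j<i. (tokens S1 ! j) \<noteq> ''.'' \<and> (tokens S1 ! j) \<noteq> ''..''
        \<and> str_prefix (stack_str (san_stack S1 j)) S2
        \<and> \<not> str_prefix (stack_str (san_stack S1 (Suc j))) S2
        \<and> (\<forall>l. Suc j \<le> l \<and> l \<le> i \<longrightarrow> length (san_stack S1 l) > length (san_stack S1 j))
        \<and> (\<exists>k. i \<le> k \<and> k < length (tokens S1) \<and> tokens S1 ! k = ''..''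
              \<and> length (san_stack S1 k) = Suc (length (san_stack S1 j))
              \<and> (\<forall>l. Suc j \<le> l \<and> l \<le> k \<longrightarrow> length (san_stack S1 l) > length (san_stack S1 j))))"
proof -
  obtain c where "resolve fs S1 = Some c" and "resolve fs S2 = Some c"
    using assms(3) unfolding same_file_def by (metis option.exhaust)
  then have final: "stack_str (san_stack S1 (length (tokens S1))) = S2"
    using resolve_eq_final_san_stack resolve_canonical[OF assms(2)] by metis
  have prefix_closed: "str_prefix (stack_str (take m p)) S2" if "str_prefix (stack_str p) S2" for p m
    using str_prefix_trans[OF str_prefix_stack_str_take that] .
  show ?thesis
    using san_stack_bad_push_popped[where P = "\<lambda>p. str_prefix (stack_str p) S2", OF prefix_closed]
      final assms(4) by (auto simp: str_prefix_def)
qed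

end
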